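(* Assume the Continuum Hypothesis. Let $X$ be a weakly Lindelöf determined (WLD) real Banach space with $\operatorname{dens} X = \omega_1$. Then $X$ contains an overcomplete subset.
   Context: A Banach space $X$ is WLD if there exist a set $\Gamma$ and a bounded linear one-to-one operator $T\colon X^* \to \ell_\infty^c(\Gamma)$ that is weak$^*$-to-pointwise continuous, where $\ell_\infty^c(\Gamma)$ is the space of bounded real functions on $\Gamma$ with countable support. $\operatorname{dens}$ denotes the density character. A subset $S$ of a Banach space $X$ with $|S| = \operatorname{dens} X$ is called overcomplete if every subset $\Lambda \subseteq S$ with $|\Lambda| = |S|$ is linearly dense in $X$. *)

theory Defs
  imports "HOL-Analysis.Analysis"
begin

unbundle cardinal_syntax

definition CH :: bool where
  "CH \<longleftrightarrow> (card_of (UNIV :: real set)) =o cardSuc natLeq"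

definition dens_is :: "'a::real_normed_vector itself \<Rightarrow> 'b rel \<Rightarrow> bool" where
  "dens_is _ r \<longleftrightarrow>
     (\<exists>D :: 'a set. closure D = UNIV \<and> (card_of (D)) =o r) \<and>
     (\<forall>D :: 'a set. closure D = UNIV \<longrightarrow> r \<le>o (card_of (D)))"

definition weak_star_topology :: "('a::real_normed_vector \<Rightarrow>\<^sub>L real) topology" where
  "weak_star_topology = pullback_topology UNIV blinfun_apply (powertop_real UNIV)"

definition ell_inf_c :: "('g \<Rightarrow> real) set" where
  "ell_inf_c = {f. bounded (range f) \<and> countable {\<gamma>. f \<gamma> \<noteq> 0}}"

text \<open>WLD: there exist Gamma and a bounded linear injective operator
  T : X^* \<rightarrow> ell_infinity^c(Gamma) that is weak-star-to-pointwise continuous.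
  Gamma is the universe of the type 'g.\<close>
definition WLD_via :: "'a::banach itself \<Rightarrow> 'g itself \<Rightarrow> bool" where
  "WLD_via _ _ \<longleftrightarrow>
    (\<exists>T :: ('a \<Rightarrow>\<^sub>L real) \<Rightarrow> ('g \<Rightarrow> real).
        (\<forall>\<phi>. T \<phi> \<in> ell_inf_c)
      \<and> (\<forall>\<phi> \<psi> \<gamma>. T (\<phi> + \<psi>) \<gamma> = T \<phi> \<gamma> + T \<psi> \<gamma>)
      \<and> (\<forall>c \<phi> \<gamma>. T (c *\<^sub>R \<phi>) \<gamma> = c * T \<phi> \<gamma>)
      \<and> (\<exists>C. \<forall>\<phi>. (SUP \<gamma>. \<bar>T \<phi> \<gamma>\<bar>) \<le> C * norm \<phi>)
      \<and> inj T
      \<and> continuous_map weak_star_topology (powertop_real UNIV) T)"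

definition overcomplete :: "'a::real_normed_vector set \<Rightarrow> bool" where
  "overcomplete S \<longleftrightarrow> dens_is TYPE('a) (card_of (S)) \<and>
     (\<forall>\<Lambda>\<subseteq>S. (card_of (\<Lambda>)) =o (card_of (S)) \<longrightarrow> closure (span \<Lambda>) = UNIV)"

end

(*
  Under CH and dens X = \<omega>\<^sub>1 the space X has the cardinality of the continuum. The WLD operator
  is given by evaluation at a family (v\<^sub>\<gamma>) of vectors, so a functional is determined by the
  countable set of pairs (v\<^sub>\<gamma>, \<phi> v\<^sub>\<gamma>) with \<phi> v\<^sub>\<gamma> \<noteq> 0; hence the dual has at most
  continuum = \<omega>\<^sub>1 many elements. Enumerate the dual in a total order with countable initial
  segments and use the Baire category theorem to pick, for every functional h, a point p h off the
  kernels of all nonzero functionals preceding h. A nonzero functional then vanishes at p h only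
  for countably many h, so by Hahn-Banach every uncountable subset of S = range p is linearly dense.
  Since X is not separable, S is uncountable, hence of cardinality \<omega>\<^sub>1.
*)

theory Submission
  imports Defs "HOL-Library.Countable_Set_Type"
begin

section \<open>Hahn-Banach for sublinear functionals\<close>

definition sublinear :: "('a::real_vector \<Rightarrow> real) \<Rightarrow> bool" where
  "sublinear p \<longleftrightarrow> (\<forall>x y. p (x + y) \<le> p x + p y) \<and> (\<forall>t x. 0 < t \<longrightarrow> p (t *\<^sub>R x) = t * p x)"

text \<open>Partial linear functionals are represented by their graphs, so that a chain of extensions
  is bounded by its union.\<close>

definition linear_graph :: "('a::real_vector \<times> real) set \<Rightarrow> bool" where
  "linear_graph G \<longleftrightarrow> (\<forall>x a b. (x, a) \<in> G \<longrightarrow> (x, b) \<in> G \<longrightarrow> a = b)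
     \<and> (\<forall>x a y b. (x, a) \<in> G \<longrightarrow> (y, b) \<in> G \<longrightarrow> (x + y, a + b) \<in> G)
     \<and> (\<forall>x a c. (x, a) \<in> G \<longrightarrow> (c *\<^sub>R x, c * a) \<in> G)"

definition graph_adjoin :: "('a::real_vector \<times> real) set \<Rightarrow> 'a \<Rightarrow> real \<Rightarrow> ('a \<times> real) set" where
  "graph_adjoin G z c = {(x + t *\<^sub>R z, a + t * c) | x a t. (x, a) \<in> G}"

lemma linear_graphD:
  assumes "linear_graph G"
  shows linear_graph_unique: "(x, a) \<in> G \<Longrightarrow> (x, b) \<in> G \<Longrightarrow> a = b"
    and linear_graph_add: "(x, a) \<in> G \<Longrightarrow> (y, b) \<in> G \<Longrightarrow> (x + y, a + b) \<in> G"
    and linear_graph_scale: "(x, a) \<in> G \<Longrightarrow> (c *\<^sub>R x, c * a) \<in> G"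
  using assms unfolding linear_graph_def by blast+

lemma linear_graph_diff:
  assumes "linear_graph G" "(x, a) \<in> G" "(y, b) \<in> G"
  shows "(x - y, a - b) \<in> G"
  using linear_graph_add[OF assms(1,2) linear_graph_scale[OF assms(1,3), of "-1"]] by simp

lemma linear_graph_zero:
  assumes "linear_graph G" "G \<noteq> {}"
  shows "(0, 0) \<in> G"
  using assms linear_graph_scale[OF assms(1), of _ _ 0] by fastforce

lemma graph_adjoinI: "(x, a) \<in> G \<Longrightarrow> (x + t *\<^sub>R z, a + t * c) \<in> graph_adjoin G z c"
  unfolding graph_adjoin_def by blast

lemma linear_graph_adjoin:
  assumes G: "linear_graph G" and z: "\<And>a. (z, a) \<notin> G"
  shows "linear_graph (graph_adjoin G z c)"
  unfolding linear_graph_def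
proof (intro conjI allI impI)
  fix w a b assume "(w, a) \<in> graph_adjoin G z c" "(w, b) \<in> graph_adjoin G z c"
  then obtain x a' t y b' s where xa: "(x, a') \<in> G" "w = x + t *\<^sub>R z" "a = a' + t * c"
    and yb: "(y, b') \<in> G" "w = y + s *\<^sub>R z" "b = b' + s * c"
    unfolding graph_adjoin_def by blast
  have "t = s"
  proof (rule ccontr)
    assume "t \<noteq> s"
    have "x - y = (s - t) *\<^sub>R z" using xa(2) yb(2) by (simp add: algebra_simps)
    hence "z = (1 / (s - t)) *\<^sub>R (x - y)" using \<open>t \<noteq> s\<close> by simp
    thus False using linear_graph_scale[OF G linear_graph_diff[OF G xa(1) yb(1)]] z by metis
  qed
  moreover from this have "a' = b'" using linear_graph_unique[OF G xa(1)] xa(2) yb by simp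
  ultimately show "a = b" using xa(3) yb(3) by simp
next
  fix w a v b assume "(w, a) \<in> graph_adjoin G z c" "(v, b) \<in> graph_adjoin G z c"
  then obtain x a' t y b' s where "(x, a') \<in> G" "w = x + t *\<^sub>R z" "a = a' + t * c"
    and "(y, b') \<in> G" "v = y + s *\<^sub>R z" "b = b' + s * c"
    unfolding graph_adjoin_def by blast
  moreover from calculation have "(x + y, a' + b') \<in> G" using linear_graph_add[OF G] by blast
  ultimately show "(w + v, a + b) \<in> graph_adjoin G z c"
    using graph_adjoinI[of "x + y" "a' + b'" G "t + s" z c] by (simp add: algebra_simps)
next
  fix w a r assume "(w, a) \<in> graph_adjoin G z c"
  then obtain x a' t where "(x, a') \<in> G" "w = x + t *\<^sub>R z" "a = a' + t * c"
    unfolding graph_adjoin_def by blast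
  moreover from calculation have "(r *\<^sub>R x, r * a') \<in> G" using linear_graph_scale[OF G] by blast
  ultimately show "(r *\<^sub>R w, r * a) \<in> graph_adjoin G z c"
    using graph_adjoinI[of "r *\<^sub>R x" "r * a'" G "r * t" z c] by (simp add: algebra_simps)
qed

lemma graph_adjoin_dominated:
  assumes p: "sublinear p" and dom: "\<And>x a. (x, a) \<in> G \<Longrightarrow> a \<le> p x"
    and G: "linear_graph G"
    and lower: "\<And>y a. (y, a) \<in> G \<Longrightarrow> a - p (y - z) \<le> c"
    and upper: "\<And>x b. (x, b) \<in> G \<Longrightarrow> c \<le> p (x + z) - b"
    and w: "(w, a) \<in> graph_adjoin G z c"
  shows "a \<le> p w"
proof -
  have hom: "p (t *\<^sub>R x) = t * p x" if "0 < t" for t x using p that unfolding sublinear_def by blast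
  obtain x a' t where xa: "(x, a') \<in> G" "w = x + t *\<^sub>R z" "a = a' + t * c"
    using w unfolding graph_adjoin_def by blast
  consider "t = 0" | "t > 0" | "t < 0" by linarith
  then show ?thesis
  proof cases
    case 1
    then show ?thesis using xa dom by simp
  next
    case 2
    have "t * c \<le> t * (p (inverse t *\<^sub>R x + z) - inverse t * a')"
      using upper[OF linear_graph_scale[OF G xa(1)]] 2 by (simp add: mult_left_mono)
    also have "\<dots> = p w - a'"
      using 2 hom[OF 2, of "inverse t *\<^sub>R x + z"] xa(2) by (simp add: algebra_simps)
    finally show ?thesis using xa(3) by simp
  next
    case 3
    define s where "s = - t"
    have s: "0 < s" using 3 by (simp add: s_def)
    have "s * (inverse s * a' - p (inverse s *\<^sub>R x - z)) \<le> s * c"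
      using lower[OF linear_graph_scale[OF G xa(1)]] s by (simp add: mult_left_mono)
    also have "s * (inverse s * a' - p (inverse s *\<^sub>R x - z)) = a' - p w"
      using s hom[OF s, of "inverse s *\<^sub>R x - z"] xa(2) by (simp add: algebra_simps s_def)
    finally show ?thesis using xa(3) by (simp add: s_def)
  qed
qed

lemma ex_graph_adjoin_value:
  assumes p: "sublinear p" and dom: "\<And>x a. (x, a) \<in> G \<Longrightarrow> a \<le> p x"
    and G: "linear_graph G" "G \<noteq> {}"
  shows "\<exists>c. (\<forall>y a. (y, a) \<in> G \<longrightarrow> a - p (y - z) \<le> c) \<and> (\<forall>x b. (x, b) \<in> G \<longrightarrow> c \<le> p (x + z) - b)"
proof -
  have sub: "p (u + v) \<le> p u + p v" for u v using p unfolding sublinear_def by blast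
  have sep: "a - p (y - z) \<le> p (x + z) - b" if "(y, a) \<in> G" "(x, b) \<in> G" for x y a b
  proof -
    have "a + b \<le> p (x + y)" using dom[OF linear_graph_add[OF G(1) that(2,1)]] by simp
    also have "\<dots> \<le> p (x + z) + p (y - z)" using sub[of "x + z" "y - z"] by simp
    finally show ?thesis by simp
  qed
  define L where "L = {a - p (y - z) | y a. (y, a) \<in> G}"
  have "L \<noteq> {}" "bdd_above L"
    using linear_graph_zero[OF G] sep unfolding L_def bdd_above_def by blast+
  then show ?thesis
    using sep by (intro exI[of _ "Sup L"]) (auto intro!: cSup_upper cSup_least simp: L_def)
qed

lemma linear_graph_Union_chain:
  assumes lin: "\<And>G. G \<in> C \<Longrightarrow> linear_graph G"
    and chain: "\<And>G H. G \<in> C \<Longrightarrow> H \<in> C \<Longrightarrow> G \<subseteq> H \<or> H \<subseteq> G"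
  shows "linear_graph (\<Union>C)"
proof -
  have two: "\<exists>G\<in>C. u \<in> G \<and> v \<in> G" if "u \<in> \<Union>C" "v \<in> \<Union>C" for u v
    using that chain by blast
  show ?thesis
    unfolding linear_graph_def
  proof (intro conjI allI impI)
    fix x a b assume "(x, a) \<in> \<Union>C" "(x, b) \<in> \<Union>C"
    then show "a = b" using two lin linear_graph_unique by metis
  next
    fix x a y b assume "(x, a) \<in> \<Union>C" "(y, b) \<in> \<Union>C"
    then show "(x + y, a + b) \<in> \<Union>C" using two lin linear_graph_add by (metis UnionI)
  next
    fix x a c assume "(x, a) \<in> \<Union>C"
    then show "(c *\<^sub>R x, c * a) \<in> \<Union>C" using lin linear_graph_scale by blast
  qed
qed

theorem Hahn_Banach_graph:
  assumes p: "sublinear p" and G0: "linear_graph G0" "G0 \<noteq> {}"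
    and dom0: "\<And>x a. (x, a) \<in> G0 \<Longrightarrow> a \<le> p x"
  shows "\<exists>F. linear F \<and> (\<forall>x. F x \<le> p x) \<and> (\<forall>x a. (x, a) \<in> G0 \<longrightarrow> F x = a)"
proof -
  define A where "A = {G. G0 \<subseteq> G \<and> linear_graph G \<and> (\<forall>x a. (x, a) \<in> G \<longrightarrow> a \<le> p x)}"
  have "\<exists>M\<in>A. \<forall>G\<in>A. M \<subseteq> G \<longrightarrow> G = M"
  proof (rule Zorn_Lemma2, intro ballI)
    fix C assume "C \<in> chains A"
    then have CA: "C \<subseteq> A" and "\<And>G H. G \<in> C \<Longrightarrow> H \<in> C \<Longrightarrow> G \<subseteq> H \<or> H \<subseteq> G"
      unfolding chains_def chain_subset_def by auto
    then have "linear_graph (\<Union>C)" by (intro linear_graph_Union_chain) (auto simp: A_def)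
    then have "C \<noteq> {} \<Longrightarrow> \<Union>C \<in> A" using CA unfolding A_def by blast
    moreover have "G0 \<in> A" using G0 dom0 unfolding A_def by blast
    ultimately show "\<exists>U\<in>A. \<forall>G\<in>C. G \<subseteq> U" by (cases "C = {}") auto
  qed
  then obtain M where "M \<in> A" and max: "\<And>G. G \<in> A \<Longrightarrow> M \<subseteq> G \<Longrightarrow> G = M" by blast
  then have M: "linear_graph M" "M \<noteq> {}" "G0 \<subseteq> M" and dom: "\<And>x a. (x, a) \<in> M \<Longrightarrow> a \<le> p x"
    using G0(2) unfolding A_def by auto
  have total: "\<exists>a. (z, a) \<in> M" for z
  proof (rule ccontr)
    assume z: "\<nexists>a. (z, a) \<in> M"
    obtain c where "\<forall>y a. (y, a) \<in> M \<longrightarrow> a - p (y - z) \<le> c" "\<forall>x b. (x, b) \<in> M \<longrightarrow> c \<le> p (x + z) - b"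
      using ex_graph_adjoin_value[OF p dom M(1,2)] by blast
    then have "graph_adjoin M z c \<in> A"
      using M graph_adjoin_dominated[OF p dom M(1)] linear_graph_adjoin[OF M(1)] z
      unfolding A_def by (force intro: graph_adjoinI[of _ _ _ 0, simplified])
    moreover have "M \<subseteq> graph_adjoin M z c" using graph_adjoinI[of _ _ M 0] by force
    moreover have "(z, c) \<in> graph_adjoin M z c"
      using graph_adjoinI[OF linear_graph_zero[OF M(1,2)], of 1] by simp
    ultimately show False using max z by blast
  qed
  define F where "F x = (THE a. (x, a) \<in> M)" for x
  have FM: "(x, F x) \<in> M" for x
    unfolding F_def using total[of x] linear_graph_unique[OF M(1)] by (metis theI)
  have F_eq: "(x, a) \<in> M \<Longrightarrow> F x = a" for x a using FM linear_graph_unique[OF M(1)] by blast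
  have "linear F"
    by (rule linearI) (simp_all add: F_eq linear_graph_add[OF M(1) FM FM] linear_graph_scale[OF M(1) FM])
  then show ?thesis using F_eq FM dom M(3) by blast
qed

lemma infdist_subspace_le_norm:
  fixes Y :: "'a::real_normed_vector set"
  assumes "subspace Y" "y \<in> Y"
  shows "t * infdist z Y \<le> norm (y + t *\<^sub>R z)"
proof (cases "t > 0")
  case False
  then show ?thesis
    using mult_nonpos_nonneg[of t "infdist z Y"] infdist_nonneg[of z Y] norm_ge_zero[of "y + t *\<^sub>R z"]
    by linarith
next
  case True
  have "- ((1 / t) *\<^sub>R y) \<in> Y" using assms by (simp add: subspace_neg subspace_scale)
  from infdist_le[OF this, of z] have "infdist z Y \<le> norm (z + (1 / t) *\<^sub>R y)"
    by (simp add: dist_norm)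
  then have "t * infdist z Y \<le> norm (t *\<^sub>R (z + (1 / t) *\<^sub>R y))" using True by simp
  also have "t *\<^sub>R (z + (1 / t) *\<^sub>R y) = y + t *\<^sub>R z" using True by (simp add: algebra_simps)
  finally show ?thesis .
qed

lemma separating_functional:
  fixes Y :: "'a::real_normed_vector set"
  assumes Y: "subspace Y" and z: "z \<notin> closure Y"
  shows "\<exists>f::'a \<Rightarrow>\<^sub>L real. (\<forall>y\<in>Y. f y = 0) \<and> f z = 1"
proof -
  have "Y \<noteq> {}" using Y subspace_0 by blast
  define d where "d = infdist z Y"
  have d: "d > 0"
    using in_closure_iff_infdist_zero[OF \<open>Y \<noteq> {}\<close>] z infdist_nonneg[of z Y] unfolding d_def by force
  define p where "p x = norm x / d" for x :: 'a
  have p: "sublinear p"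
    unfolding sublinear_def p_def using d
    by (auto intro!: divide_right_mono norm_triangle_ineq simp flip: add_divide_distrib)
  define G0 where "G0 = graph_adjoin (Y \<times> {0}) z 1"
  have "linear_graph (Y \<times> {0})"
    using Y unfolding linear_graph_def by (auto simp: subspace_add subspace_scale)
  then have G0: "linear_graph G0" unfolding G0_def using z closure_subset by (intro linear_graph_adjoin) auto
  have G0I: "(y + t *\<^sub>R z, t) \<in> G0" if "y \<in> Y" for y t
    using graph_adjoinI[of y 0 "Y \<times> {0}" t z 1] that unfolding G0_def by simp
  have dom: "a \<le> p w" if wa: "(w, a) \<in> G0" for w a
  proof -
    obtain y where "y \<in> Y" "w = y + a *\<^sub>R z"
      using wa unfolding G0_def graph_adjoin_def by force
    then have "a * d \<le> norm w" using infdist_subspace_le_norm[OF Y] unfolding d_def by blast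
    then show ?thesis unfolding p_def using d by (simp add: pos_le_divide_eq)
  qed
  obtain F where F: "linear F" "\<And>x. F x \<le> p x" "\<And>x a. (x, a) \<in> G0 \<Longrightarrow> F x = a"
    using Hahn_Banach_graph[OF p G0 _ dom] G0I[OF subspace_0[OF Y]] by blast
  have "\<bar>F x\<bar> \<le> norm x * (1 / d)" for x
    using F(2)[of x] F(2)[of "- x"] linear_neg[OF F(1)] unfolding p_def by simp
  then have "bounded_linear F"
    using F(1) by (intro bounded_linear_intro[of F "1 / d"]) (auto simp: linear_add linear_scale)
  moreover have "F y = 0" if "y \<in> Y" for y using F(3)[OF G0I[OF that, of 0]] by simp
  moreover have "F z = 1" using F(3)[OF G0I[OF subspace_0[OF Y], of 1]] by simp
  ultimately show ?thesis by (intro exI[of _ "Blinfun F"]) (simp add: bounded_linear_Blinfun_apply)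
qed

section \<open>Functionals on a non-separable Banach space\<close>

lemma interior_blinfun_kernel:
  fixes g :: "'a::real_normed_vector \<Rightarrow>\<^sub>L real"
  assumes "g \<noteq> 0"
  shows "interior {x. g x = 0} = {}"
proof (rule ccontr)
  assume "interior {x. g x = 0} \<noteq> {}"
  then obtain x r where r: "r > 0" "ball x r \<subseteq> {x. g x = 0}" by (meson ex_in_conv mem_interior)
  obtain v where v: "g v \<noteq> 0" using assms by (metis blinfun_eqI zero_blinfun.rep_eq)
  then have "norm v > 0" by (metis blinfun.zero_right zero_less_norm_iff)
  define u where "u = (r / (2 * norm v)) *\<^sub>R v"
  have "x \<in> ball x r" "x + u \<in> ball x r"
    using r \<open>norm v > 0\<close> by (auto simp: u_def dist_norm)
  then have "g x = 0" "g (x + u) = 0" using r(2) by blast+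
  then have "g u = 0" by (simp add: blinfun.add_right)
  then show False using v r \<open>norm v > 0\<close> by (simp add: u_def blinfun.scaleR_right)
qed

lemma ex_point_outside_countable_kernels:
  fixes C :: "('a::banach \<Rightarrow>\<^sub>L real) set"
  assumes "countable C" "0 \<notin> C"
  shows "\<exists>x. \<forall>g\<in>C. g x \<noteq> 0"
proof -
  define K where "K = (\<lambda>g. {x. blinfun_apply g x = 0}) ` C"
  have "euclidean interior_of \<Union>K = {}"
  proof (rule Baire_category_alt)
    show "completely_metrizable_space (euclidean :: 'a topology) \<or>
        locally_compact_space (euclidean :: 'a topology) \<and> regular_space (euclidean :: 'a topology)"
      using completely_metrizable_space_euclidean by blast
    show "countable K" using assms(1) unfolding K_def by blast
  next
    fix T assume "T \<in> K"
    then obtain g where "g \<in> C" "T = {x. g x = 0}" unfolding K_def by blast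
    moreover have "closed {x. g x = 0}" by (intro closed_Collect_eq continuous_intros)
    ultimately show "closedin euclidean T \<and> euclidean interior_of T = {}"
      using assms(2) interior_blinfun_kernel by (metis closed_closedin euclidean_interior_of)
  qed
  then have "\<Union>K \<noteq> UNIV" by auto
  then show ?thesis unfolding K_def by blast
qed

lemma closure_span_singleton_neq_UNIV:
  fixes x :: "'a::real_normed_vector"
  assumes nonsep: "\<And>D::'a set. closure D = UNIV \<Longrightarrow> uncountable D"
  shows "closure (span {x}) \<noteq> UNIV"
proof
  assume dense: "closure (span {x}) = UNIV"
  have "span {x} = (\<lambda>c. c *\<^sub>R x) ` closure \<rat>" by (simp add: span_singleton Rats_closure_real)
  also have "\<dots> \<subseteq> closure ((\<lambda>c. c *\<^sub>R x) ` \<rat>)"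
    by (intro image_closure_subset continuous_intros closed_closure closure_subset)
  finally have "closure ((\<lambda>c. c *\<^sub>R x) ` \<rat>) = UNIV"
    using dense by (metis closure_closure closure_mono top.extremum_uniqueI)
  then show False using nonsep countable_rat by blast
qed

lemma ex_nonzero_functional_vanishing_at:
  fixes x :: "'a::real_normed_vector"
  assumes nonsep: "\<And>D::'a set. closure D = UNIV \<Longrightarrow> uncountable D"
  shows "\<exists>g::'a \<Rightarrow>\<^sub>L real. g \<noteq> 0 \<and> blinfun_apply g x = 0"
proof -
  obtain z where "z \<notin> closure (span {x})" using closure_span_singleton_neq_UNIV[OF nonsep] by blast
  then obtain f :: "'a \<Rightarrow>\<^sub>L real" where "\<forall>y\<in>span {x}. f y = 0" "f z = 1"
    using separating_functional[OF subspace_span] by blast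
  then show ?thesis by (intro exI[of _ f]) (auto simp: span_base)
qed

lemma uncountable_dual:
  assumes nonsep: "\<And>D::'a::banach set. closure D = UNIV \<Longrightarrow> uncountable D"
  shows "uncountable (UNIV :: ('a \<Rightarrow>\<^sub>L real) set)"
proof
  assume "countable (UNIV :: ('a \<Rightarrow>\<^sub>L real) set)"
  then obtain x :: 'a where "\<forall>g\<in>UNIV - {0 :: 'a \<Rightarrow>\<^sub>L real}. g x \<noteq> 0"
    using ex_point_outside_countable_kernels[of "UNIV - {0}"] by blast
  then show False using ex_nonzero_functional_vanishing_at[OF nonsep, of x] by blast
qed


section \<open>Weak-star continuous functionals and WLD spaces\<close>

lemma evaluation_if_vanishes_on_finite_annihilator:
  fixes L :: "('a::real_normed_vector \<Rightarrow>\<^sub>L real) \<Rightarrow> real"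
  assumes "finite F" "linear L" "\<And>\<phi>. \<forall>x\<in>F. blinfun_apply \<phi> x = 0 \<Longrightarrow> L \<phi> = 0"
  shows "\<exists>x. \<forall>\<phi>. L \<phi> = blinfun_apply \<phi> x"
  using assms
proof (induction F arbitrary: L rule: finite_induct)
  case empty
  then show ?case by (intro exI[of _ 0]) auto
next
  case (insert a F)
  show ?case
  proof (cases "\<exists>\<psi>::'a \<Rightarrow>\<^sub>L real. (\<forall>x\<in>F. \<psi> x = 0) \<and> \<psi> a \<noteq> 0")
    case False
    show ?thesis
    proof (rule insert.IH[OF insert.prems(1)])
      fix \<phi> :: "'a \<Rightarrow>\<^sub>L real" assume "\<forall>x\<in>F. \<phi> x = 0"
      with False have "\<forall>x\<in>insert a F. \<phi> x = 0" by auto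
      then show "L \<phi> = 0" by (rule insert.prems(2))
    qed
  next
    case True
    then obtain \<psi>0 :: "'a \<Rightarrow>\<^sub>L real" where \<psi>0: "\<forall>x\<in>F. \<psi>0 x = 0" "\<psi>0 a \<noteq> 0" by blast
    define \<psi> where "\<psi> = (1 / \<psi>0 a) *\<^sub>R \<psi>0"
    have \<psi>: "\<forall>x\<in>F. \<psi> x = 0" "\<psi> a = 1" using \<psi>0 by (auto simp: \<psi>_def blinfun.scaleR_left)
    define L' where "L' \<phi> = L \<phi> - blinfun_apply \<phi> a * L \<psi>" for \<phi>
    have "linear (\<lambda>\<phi>. blinfun_apply \<phi> a * L \<psi>)"
      by (intro linearI) (simp_all add: blinfun.add_left blinfun.scaleR_left distrib_right)
    then have lin': "linear L'"
      unfolding L'_def using insert.prems(1) by (rule linear_compose_sub[rotated])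
    have vanish': "L' \<phi> = 0" if "\<forall>x\<in>F. blinfun_apply \<phi> x = 0" for \<phi>
    proof -
      have "\<forall>x\<in>insert a F. blinfun_apply (\<phi> - \<phi> a *\<^sub>R \<psi>) x = 0"
        using that \<psi> by (simp add: blinfun.diff_left blinfun.scaleR_left)
      then have "L (\<phi> - \<phi> a *\<^sub>R \<psi>) = 0" by (rule insert.prems(2))
      then show ?thesis using insert.prems(1) by (simp add: L'_def linear_diff linear_scale)
    qed
    obtain x where x: "\<And>\<phi>. L' \<phi> = \<phi> x" using insert.IH[OF lin' vanish'] by blast
    have "L \<phi> = \<phi> (x + L \<psi> *\<^sub>R a)" for \<phi>
    proof -
      have "\<phi> (x + L \<psi> *\<^sub>R a) = \<phi> x + \<phi> a * L \<psi>"
        by (simp add: blinfun.add_right blinfun.scaleR_right mult.commute)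
      then show ?thesis using x[of \<phi>] unfolding L'_def by linarith
    qed
    then show ?thesis by blast
  qed
qed

lemma weak_star_continuous_linear_is_evaluation:
  fixes L :: "('a::real_normed_vector \<Rightarrow>\<^sub>L real) \<Rightarrow> real"
  assumes lin: "linear L" and cont: "continuous_map weak_star_topology euclideanreal L"
  shows "\<exists>x. \<forall>\<phi>. L \<phi> = blinfun_apply \<phi> x"
proof -
  have top: "topspace weak_star_topology = UNIV"
    by (simp add: weak_star_topology_def topspace_pullback_topology)
  have "openin weak_star_topology (L -` {-1<..<1})"
    using openin_continuous_map_preimage[OF cont, of "{-1<..<1}"] unfolding top by (simp add: vimage_def)
  then obtain U where U: "openin (powertop_real UNIV) U" "L -` {-1<..<1} = blinfun_apply -` U"
    unfolding weak_star_topology_def openin_pullback_topology by auto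
  have "(0 :: 'a \<Rightarrow>\<^sub>L real) \<in> L -` {-1<..<1}" using linear_0[OF lin] by simp
  then have "blinfun_apply 0 \<in> U" using U(2) by blast
  then have "\<exists>V. finite {i \<in> UNIV. V i \<noteq> topspace euclideanreal} \<and> (\<forall>i\<in>UNIV. openin euclideanreal (V i))
      \<and> (\<lambda>_. 0) \<in> Pi\<^sub>E UNIV V \<and> Pi\<^sub>E UNIV V \<subseteq> U"
    using U(1) unfolding openin_product_topology_alt zero_blinfun.rep_eq by blast
  then obtain V where V: "finite {i. V i \<noteq> UNIV}" "(\<lambda>_. 0) \<in> Pi\<^sub>E UNIV V" "Pi\<^sub>E UNIV V \<subseteq> U"
    by auto
  show ?thesis
  proof (rule evaluation_if_vanishes_on_finite_annihilator[OF V(1) lin])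
    fix \<phi> :: "'a \<Rightarrow>\<^sub>L real" assume \<phi>: "\<forall>x\<in>{i. V i \<noteq> UNIV}. \<phi> x = 0"
    have small: "\<bar>t * L \<phi>\<bar> < 1" for t
    proof -
      have "t * \<phi> i \<in> V i" for i using V(2) \<phi> by (cases "V i = UNIV") (auto simp: PiE_iff)
      then have "blinfun_apply (t *\<^sub>R \<phi>) \<in> Pi\<^sub>E UNIV V" by (simp add: PiE_iff blinfun.scaleR_left)
      then have "t *\<^sub>R \<phi> \<in> L -` {-1<..<1}" using U(2) V(3) by blast
      then show ?thesis by (simp add: linear_scale[OF lin] abs_less_iff)
    qed
    show "L \<phi> = 0"
    proof (rule ccontr)
      assume "L \<phi> \<noteq> 0"
      then have "\<bar>(2 / \<bar>L \<phi>\<bar>) * L \<phi>\<bar> = 2" by (simp add: abs_mult)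
      then show False using small[of "2 / \<bar>L \<phi>\<bar>"] by simp
    qed
  qed
qed

lemma WLD_via_separating_family:
  assumes "WLD_via (X :: 'a::banach itself) (\<Gamma> :: 'g itself)"
  shows "\<exists>v :: 'g \<Rightarrow> 'a. inj (\<lambda>\<phi>::'a \<Rightarrow>\<^sub>L real. \<lambda>\<gamma>. \<phi> (v \<gamma>))
    \<and> (\<forall>\<phi>::'a \<Rightarrow>\<^sub>L real. countable {\<gamma>. \<phi> (v \<gamma>) \<noteq> 0})"
proof -
  obtain T :: "('a \<Rightarrow>\<^sub>L real) \<Rightarrow> ('g \<Rightarrow> real)" where
    T_c: "\<And>\<phi>. T \<phi> \<in> ell_inf_c"
    and T_add: "\<And>\<phi> \<psi> \<gamma>. T (\<phi> + \<psi>) \<gamma> = T \<phi> \<gamma> + T \<psi> \<gamma>"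
    and T_scale: "\<And>c \<phi> \<gamma>. T (c *\<^sub>R \<phi>) \<gamma> = c * T \<phi> \<gamma>"
    and T_inj: "inj T"
    and T_cont: "continuous_map weak_star_topology (powertop_real UNIV) T"
    using assms unfolding WLD_via_def by blast
  have "\<exists>x. \<forall>\<phi>. T \<phi> \<gamma> = blinfun_apply \<phi> x" for \<gamma>
  proof (rule weak_star_continuous_linear_is_evaluation)
    show "linear (\<lambda>\<phi>. T \<phi> \<gamma>)" by (intro linearI) (simp_all add: T_add T_scale)
    show "continuous_map weak_star_topology euclideanreal (\<lambda>\<phi>. T \<phi> \<gamma>)"
      using continuous_map_compose[OF T_cont continuous_map_product_projection[of \<gamma> UNIV]]
      by (simp add: o_def)
  qed
  then obtain v where "\<And>\<phi> \<gamma>. T \<phi> \<gamma> = blinfun_apply \<phi> (v \<gamma>)" by metis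
  then have T: "T = (\<lambda>\<phi> \<gamma>. \<phi> (v \<gamma>))" by blast
  have "countable {\<gamma>. \<phi> (v \<gamma>) \<noteq> 0}" for \<phi> :: "'a \<Rightarrow>\<^sub>L real"
    using T_c[of \<phi>] unfolding ell_inf_c_def T by simp
  then show ?thesis using T_inj unfolding T by blast
qed


section \<open>Injections into the reals\<close>

lemma nat_to_real_lepoll_real: "(UNIV :: (nat \<Rightarrow> real) set) \<lesssim> (UNIV :: real set)"
proof -
  obtain b :: "nat set \<Rightarrow> real" where "bij b"
    using nat_sets_eqpoll_reals unfolding eqpoll_def by blast
  then have inj_inv: "inj (inv b)" by (simp add: bij_imp_bij_inv bij_is_inj)
  define code where "code s = {prod_encode (n, k) | n k. k \<in> inv b (s n)}" for s :: "nat \<Rightarrow> real"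
  have decode: "inv b (s n) = {k. prod_encode (n, k) \<in> code s}" for s n
    by (auto simp: code_def prod_encode_eq)
  have "inj code"
  proof (rule injI)
    fix s s' assume "code s = code s'"
    then have "inv b (s n) = inv b (s' n)" for n by (simp add: decode)
    then have "s n = s' n" for n by (simp add: inj_eq[OF inj_inv])
    then show "s = s'" by blast
  qed
  then have "(UNIV :: (nat \<Rightarrow> real) set) \<lesssim> (UNIV :: nat set set)" unfolding lepoll_def by blast
  also have "\<dots> \<approx> (UNIV :: real set)" by (rule nat_sets_eqpoll_reals)
  finally show ?thesis .
qed

lemma real_pair_lepoll_real: "(UNIV :: (real \<times> real) set) \<lesssim> (UNIV :: real set)"
proof -
  have "inj (\<lambda>p::real \<times> real. \<lambda>n::nat. if n = 0 then fst p else snd p)"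
  proof (rule injI)
    fix p q :: "real \<times> real"
    assume eq: "(\<lambda>n::nat. if n = 0 then fst p else snd p) = (\<lambda>n. if n = 0 then fst q else snd q)"
    show "p = q" using fun_cong[OF eq, of 0] fun_cong[OF eq, of 1] by (simp add: prod_eq_iff)
  qed
  then have "(UNIV :: (real \<times> real) set) \<lesssim> (UNIV :: (nat \<Rightarrow> real) set)" unfolding lepoll_def by blast
  also have "\<dots> \<lesssim> (UNIV :: real set)" by (rule nat_to_real_lepoll_real)
  finally show ?thesis .
qed

lemma lepoll_real_if_dense:
  fixes D :: "'a::{first_countable_topology, t2_space} set"
  assumes "closure D = UNIV" "D \<lesssim> (UNIV :: real set)"
  shows "(UNIV :: 'a set) \<lesssim> (UNIV :: real set)"
proof -
  obtain j :: "'a \<Rightarrow> real" where j: "inj_on j D" using assms(2) unfolding lepoll_def by blast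
  obtain s where s: "\<And>x n. s x n \<in> D" "\<And>x. s x \<longlonglongrightarrow> x"
    using assms(1) closure_sequential by (metis UNIV_I)
  have "inj (\<lambda>x n. j (s x n))"
  proof (rule injI)
    fix x y assume "(\<lambda>n. j (s x n)) = (\<lambda>n. j (s y n))"
    then have "s x = s y" using inj_onD[OF j _ s(1) s(1)] by (metis ext fun_cong)
    then show "x = y" using LIMSEQ_unique[OF s(2)[of x], of y] s(2)[of y] by simp
  qed
  then have "(UNIV :: 'a set) \<lesssim> (UNIV :: (nat \<Rightarrow> real) set)" unfolding lepoll_def by blast
  also have "\<dots> \<lesssim> (UNIV :: real set)" by (rule nat_to_real_lepoll_real)
  finally show ?thesis .
qed

lemma countable_sets_lepoll_real:
  assumes "(UNIV :: 'x set) \<lesssim> (UNIV :: real set)"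
  shows "{A :: 'x set. countable A} \<lesssim> (UNIV :: real set)"
proof -
  obtain j :: "'x \<Rightarrow> real" where j: "inj j" using assms unfolding lepoll_def by blast
  define code where
    "code A = (\<lambda>n. case n of 0 \<Rightarrow> if A = {} then 0 else 1 | Suc m \<Rightarrow> j (from_nat_into A m))"
    for A :: "'x set"
  have "inj_on code {A. countable A}"
  proof (rule inj_onI)
    fix A B assume "A \<in> {A. countable A}" "B \<in> {A. countable A}" and eq: "code A = code B"
    have empty: "(A = {}) = (B = {})" using fun_cong[OF eq, of 0] by (simp add: code_def split: if_splits)
    have "from_nat_into A m = from_nat_into B m" for m
      using fun_cong[OF eq, of "Suc m"] by (simp add: code_def inj_eq[OF j])
    then have "range (from_nat_into A) = range (from_nat_into B)" by simp
    then show "A = B" using empty \<open>A \<in> _\<close> \<open>B \<in> _\<close> by (cases "A = {}") simp_all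
  qed
  then have "{A :: 'x set. countable A} \<lesssim> (UNIV :: (nat \<Rightarrow> real) set)" unfolding lepoll_def by blast
  also have "\<dots> \<lesssim> (UNIV :: real set)" by (rule nat_to_real_lepoll_real)
  finally show ?thesis .
qed

lemma dual_lepoll_real_if_WLD:
  assumes "WLD_via (X :: 'a::banach itself) (\<Gamma> :: 'g itself)" "(UNIV :: 'a set) \<lesssim> (UNIV :: real set)"
  shows "(UNIV :: ('a \<Rightarrow>\<^sub>L real) set) \<lesssim> (UNIV :: real set)"
proof -
  obtain v :: "'g \<Rightarrow> 'a" where v_inj: "inj (\<lambda>\<phi>::'a \<Rightarrow>\<^sub>L real. \<lambda>\<gamma>. \<phi> (v \<gamma>))"
    and v_countable: "\<And>\<phi>::'a \<Rightarrow>\<^sub>L real. countable {\<gamma>. \<phi> (v \<gamma>) \<noteq> 0}"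
    using WLD_via_separating_family[OF assms(1)] by blast
  define graph where "graph \<phi> = (\<lambda>\<gamma>. (v \<gamma>, \<phi> (v \<gamma>))) ` {\<gamma>. \<phi> (v \<gamma>) \<noteq> 0}" for \<phi> :: "'a \<Rightarrow>\<^sub>L real"
  have graph_iff: "(x, r) \<in> graph \<phi> \<longleftrightarrow> x \<in> range v \<and> r = \<phi> x \<and> r \<noteq> 0" for \<phi> x r
    by (auto simp: graph_def)
  have "inj graph"
  proof (rule injI)
    fix \<phi> \<psi> assume eq: "graph \<phi> = graph \<psi>"
    have "\<phi> (v \<gamma>) = \<psi> (v \<gamma>)" for \<gamma>
    proof -
      have "(r = \<phi> (v \<gamma>) \<and> r \<noteq> 0) \<longleftrightarrow> (r = \<psi> (v \<gamma>) \<and> r \<noteq> 0)" for r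
        using eq graph_iff[of "v \<gamma>" r] by auto
      from this[of "\<phi> (v \<gamma>)"] this[of "\<psi> (v \<gamma>)"] show ?thesis by auto
    qed
    then show "\<phi> = \<psi>" using v_inj by (auto dest: injD)
  qed
  moreover have "countable (graph \<phi>)" for \<phi> using v_countable by (simp add: graph_def)
  ultimately have "(UNIV :: ('a \<Rightarrow>\<^sub>L real) set) \<lesssim> {A :: ('a \<times> real) set. countable A}"
    unfolding lepoll_def by blast
  also have "\<dots> \<lesssim> (UNIV :: real set)"
  proof (rule countable_sets_lepoll_real)
    have "(UNIV :: ('a \<times> real) set) \<lesssim> (UNIV :: (real \<times> real) set)"
      using times_lepoll_mono[OF assms(2) lepoll_refl[of "UNIV :: real set"]] by simp
    then show "(UNIV :: ('a \<times> real) set) \<lesssim> (UNIV :: real set)"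
      using real_pair_lepoll_real by (rule lepoll_trans)
  qed
  finally show ?thesis .
qed


section \<open>Countability and the successor of \<aleph>0\<close>

unbundle cardinal_syntax

lemma countable_iff_ordLess_aleph1: "countable A \<longleftrightarrow> |A| <o cardSuc natLeq"
  by (simp add: countable_card_le_natLeq cardSuc_ordLeq_ordLess[OF natLeq_Card_order card_of_Card_order])

lemma uncountable_iff_aleph1_ordLeq: "uncountable A \<longleftrightarrow> cardSuc natLeq \<le>o |A|"
  using not_ordLess_iff_ordLeq[OF cardSuc_Well_order[OF natLeq_Card_order] card_of_Well_order]
  by (simp add: countable_iff_ordLess_aleph1)

lemma ex_total_rel_countable_initial_segments:
  assumes "|UNIV :: 'x set| \<le>o cardSuc natLeq"
  shows "\<exists>r :: 'x \<Rightarrow> 'x \<Rightarrow> bool. (\<forall>a b. r a b \<or> r b a) \<and> (\<forall>a. countable {b. r b a})"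
proof -
  let ?W = "cardSuc natLeq"
  have W: "Card_order ?W" by (simp add: cardSuc_Card_order natLeq_Card_order)
  then have "wo_rel ?W" unfolding wo_rel_def by (simp add: card_order_on_well_order_on)
  have "|UNIV :: 'x set| \<le>o |Field ?W|"
    using assms ordIso_symmetric[OF card_of_Field_ordIso[OF W]] by (rule ordLeq_ordIso_trans)
  then obtain e :: "'x \<Rightarrow> _" where e: "inj e" "range e \<subseteq> Field ?W"
    unfolding card_of_ordLeq[symmetric] by blast
  define r where "r a b \<longleftrightarrow> (e a, e b) \<in> ?W" for a b
  have "r a b \<or> r b a" for a b
    using wo_rel.TOTALS[OF \<open>wo_rel ?W\<close>] e(2) unfolding r_def by blast
  moreover have "countable {b. r b a}" for a
  proof -
    have "|underS ?W (e a)| <o ?W" using card_of_underS[OF W] e(2) by blast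
    then have "countable (insert (e a) (underS ?W (e a)))"
      by (simp add: countable_iff_ordLess_aleph1 [symmetric])
    moreover have "e ` {b. r b a} \<subseteq> insert (e a) (underS ?W (e a))"
      unfolding r_def underS_def by auto
    ultimately show ?thesis
      using e(1) by (meson countable_image_inj_on countable_subset inj_on_subset subset_UNIV)
  qed
  ultimately show ?thesis by blast
qed

lemma uncountable_dense_if_dens_aleph1:
  fixes D :: "'a::real_normed_vector set"
  assumes "dens_is (X :: 'a itself) (cardSuc natLeq)" "closure D = UNIV"
  shows "uncountable D"
  using assms unfolding dens_is_def uncountable_iff_aleph1_ordLeq by blast

lemma dens_is_ordIso:
  fixes r :: "'b rel" and r' :: "'c rel"
  assumes "dens_is X r" "r' =o r"
  shows "dens_is X r'"
proof -
  obtain D :: "'a set" where "closure D = UNIV" "|D| =o r"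
    and least: "\<And>D'::'a set. closure D' = UNIV \<Longrightarrow> r \<le>o |D'|"
    using assms(1) unfolding dens_is_def by blast
  then show ?thesis
    unfolding dens_is_def
    using ordIso_transitive[OF _ ordIso_symmetric[OF assms(2)]] ordIso_ordLeq_trans[OF assms(2) least]
    by blast
qed

section \<open>Points avoiding the kernels of earlier functionals\<close>

lemma ex_points_with_countable_zero_sets:
  assumes "|UNIV :: ('a::banach \<Rightarrow>\<^sub>L real) set| \<le>o cardSuc natLeq"
  shows "\<exists>p :: ('a \<Rightarrow>\<^sub>L real) \<Rightarrow> 'a. \<forall>g::'a \<Rightarrow>\<^sub>L real. g \<noteq> 0 \<longrightarrow> countable {h. blinfun_apply g (p h) = 0}"
proof -
  obtain r :: "('a \<Rightarrow>\<^sub>L real) \<Rightarrow> _" where r_total: "\<And>g h. r g h \<or> r h g"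
    and r_countable: "\<And>h. countable {g. r g h}"
    using ex_total_rel_countable_initial_segments[OF assms] by blast
  have "\<exists>x. \<forall>g\<in>{g. r g h} - {0}. g x \<noteq> 0" for h
    using r_countable by (intro ex_point_outside_countable_kernels) auto
  then obtain p where "\<And>h. \<forall>g\<in>{g. r g h} - {0}. g (p h) \<noteq> 0" by metis
  then have p: "blinfun_apply g (p h) \<noteq> 0" if "g \<noteq> 0" "r g h" for g h using that by blast
  have "countable {h. blinfun_apply g (p h) = 0}" if "g \<noteq> 0" for g :: "'a \<Rightarrow>\<^sub>L real"
  proof (rule countable_subset)
    show "{h. blinfun_apply g (p h) = 0} \<subseteq> {h. r h g}" using p[OF that] r_total by blast
  qed (rule r_countable)
  then show ?thesis by blast
qed

lemma uncountable_range_if_countable_zero_sets: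
  fixes p :: "('a::banach \<Rightarrow>\<^sub>L real) \<Rightarrow> 'a"
  assumes nonsep: "\<And>D::'a set. closure D = UNIV \<Longrightarrow> uncountable D"
    and zeros: "\<And>g::'a \<Rightarrow>\<^sub>L real. g \<noteq> 0 \<Longrightarrow> countable {h. blinfun_apply g (p h) = 0}"
  shows "uncountable (range p)"
proof
  assume "countable (range p)"
  obtain k :: "'a \<Rightarrow> ('a \<Rightarrow>\<^sub>L real)" where k: "\<And>x. k x \<noteq> 0" "\<And>x. k x x = 0"
    using ex_nonzero_functional_vanishing_at[OF nonsep] by metis
  have "UNIV \<subseteq> (\<Union>s\<in>range p. {h. k s (p h) = 0})" using k(2) by blast
  moreover have "countable (\<Union>s\<in>range p. {h. k s (p h) = 0})"
    using \<open>countable (range p)\<close> by (rule countable_UN) (rule zeros[OF k(1)])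
  ultimately show False using uncountable_dual[OF nonsep] countable_subset by blast
qed

lemma closure_span_eq_UNIV_if_countable_zero_sets:
  fixes p :: "('a::banach \<Rightarrow>\<^sub>L real) \<Rightarrow> 'a"
  assumes zeros: "\<And>g::'a \<Rightarrow>\<^sub>L real. g \<noteq> 0 \<Longrightarrow> countable {h. blinfun_apply g (p h) = 0}"
    and \<Lambda>: "\<Lambda> \<subseteq> range p" "uncountable \<Lambda>"
  shows "closure (span \<Lambda>) = UNIV"
proof (rule ccontr)
  assume "closure (span \<Lambda>) \<noteq> UNIV"
  then obtain f :: "'a \<Rightarrow>\<^sub>L real" and z where f: "\<forall>y\<in>span \<Lambda>. f y = 0" "f z = 1"
    using separating_functional[OF subspace_span] by blast
  have "\<Lambda> \<subseteq> p ` {h. f (p h) = 0}"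
  proof
    fix s assume "s \<in> \<Lambda>"
    then obtain h where "s = p h" using \<Lambda>(1) by blast
    moreover have "f s = 0" using f(1) span_base \<open>s \<in> \<Lambda>\<close> by blast
    ultimately show "s \<in> p ` {h. f (p h) = 0}" by blast
  qed
  moreover have "f \<noteq> 0" using f(2) by auto
  ultimately show False using countable_subset[OF _ countable_image[OF zeros]] \<Lambda>(2) by blast
qed

theorem ex_aleph1_set_with_linearly_dense_uncountable_subsets:
  assumes nonsep: "\<And>D::'a::banach set. closure D = UNIV \<Longrightarrow> uncountable D"
    and dual: "|UNIV :: ('a \<Rightarrow>\<^sub>L real) set| \<le>o cardSuc natLeq"
  shows "\<exists>S::'a::banach set. |S| =o cardSuc natLeq \<and> (\<forall>\<Lambda>\<subseteq>S. uncountable \<Lambda> \<longrightarrow> closure (span \<Lambda>) = UNIV)"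
proof -
  obtain p :: "('a \<Rightarrow>\<^sub>L real) \<Rightarrow> 'a"
    where zeros: "\<And>g::'a \<Rightarrow>\<^sub>L real. g \<noteq> 0 \<Longrightarrow> countable {h. blinfun_apply g (p h) = 0}"
    using ex_points_with_countable_zero_sets[OF dual] by blast
  have "uncountable (range p)" using nonsep zeros by (rule uncountable_range_if_countable_zero_sets)
  moreover have "|range p| \<le>o cardSuc natLeq"
    using card_of_image[of p UNIV] dual by (rule ordLeq_transitive)
  ultimately have "|range p| =o cardSuc natLeq"
    by (simp add: uncountable_iff_aleph1_ordLeq ordIso_iff_ordLeq)
  then show ?thesis using closure_span_eq_UNIV_if_countable_zero_sets[OF zeros] by blast
qed

theorem corollary3p4:
  fixes X :: "'a::banach itself" and \<Gamma> :: "'g itself"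
  assumes "CH"
    and "WLD_via X \<Gamma>"
    and "dens_is X (cardSuc natLeq)"
  shows "\<exists>S :: 'a set. overcomplete S"
proof -
  have CH: "|UNIV :: real set| =o cardSuc natLeq" using assms(1) unfolding CH_def .
  obtain D :: "'a set" where D: "closure D = UNIV" "|D| =o cardSuc natLeq"
    using assms(3) unfolding dens_is_def by blast
  then have "D \<approx> (UNIV :: real set)"
    unfolding eqpoll_iff_card_of_ordIso using CH ordIso_symmetric ordIso_transitive by blast
  then have "(UNIV :: 'a set) \<lesssim> (UNIV :: real set)"
    using D(1) eqpoll_imp_lepoll lepoll_real_if_dense by blast
  then have "(UNIV :: ('a \<Rightarrow>\<^sub>L real) set) \<lesssim> (UNIV :: real set)"
    by (rule dual_lepoll_real_if_WLD[OF assms(2)])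
  then have "|UNIV :: ('a \<Rightarrow>\<^sub>L real) set| \<le>o cardSuc natLeq"
    using CH unfolding lepoll_def card_of_ordLeq by (rule ordLeq_ordIso_trans)
  then obtain S :: "'a set" where S: "|S| =o cardSuc natLeq"
    and spanning: "\<And>\<Lambda>. \<Lambda> \<subseteq> S \<Longrightarrow> uncountable \<Lambda> \<Longrightarrow> closure (span \<Lambda>) = UNIV"
    using ex_aleph1_set_with_linearly_dense_uncountable_subsets uncountable_dense_if_dens_aleph1[OF assms(3)]
    by blast
  have "overcomplete S"
    unfolding overcomplete_def
  proof (intro conjI allI impI)
    have "dens_is TYPE('a) (cardSuc natLeq)" using assms(3) unfolding dens_is_def .
    then show "dens_is TYPE('a) |S|" using S by (rule dens_is_ordIso)
  next
    fix \<Lambda> assume "\<Lambda> \<subseteq> S" "|\<Lambda>| =o |S|"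
    then have "uncountable \<Lambda>"
      using S ordIso_iff_ordLeq ordIso_transitive unfolding uncountable_iff_aleph1_ordLeq by metis
    then show "closure (span \<Lambda>) = UNIV" using spanning \<open>\<Lambda> \<subseteq> S\<close> by blast
  qed
  then show ?thesis by blast
qed

end
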